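(* For every natural number $n\geq 1$, $\tau(B_n) > B_{\lfloor \tau(n)/3\rfloor}$, where $\lfloor\cdot\rfloor$ denotes the floor function.
   Context: The balancing numbers $(B_n)_{n\geq 0}$ are defined by $B_0=0$, $B_1=1$, $B_{n+1}=6B_n-B_{n-1}$ for $n\geq 1$. For a positive integer $m$, $\tau(m)$ denotes the number of positive divisors of $m$. *)

theory Defs
  imports Complex_Main
begin

fun balancing :: "nat \<Rightarrow> nat" where
  "balancing 0 = 0"
| "balancing (Suc 0) = 1"
| "balancing (Suc (Suc n)) = 6 * balancing (Suc n) - balancing n"

definition num_divisors :: "nat \<Rightarrow> nat" where
  "num_divisors m = card {d. d dvd m \<and> 0 < d}"

end

theory Submission
  imports Defs "HOL-Number_Theory.Number_Theory"
begin

text \<open>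
  For every divisor \<open>d > 1\<close> of \<open>n\<close> the number \<open>B\<^sub>d\<close> has a primitive prime divisor, i.e. one
  dividing no earlier \<open>B\<^sub>m\<close>; it divides \<open>B\<^sub>n\<close> because \<open>B\<^sub>d\<close> does, and distinct \<open>d\<close> give distinct
  primes. Hence \<open>B\<^sub>n\<close> has at least \<open>\<tau>(n) - 1\<close> prime factors and \<open>\<tau>(B\<^sub>n) \<ge> 2\<^sup>\<tau>\<^sup>(\<^sup>n\<^sup>)\<^sup>-\<^sup>1\<close>, while
  \<open>B\<^sub>k \<le> 6\<^sup>k\<^sup>-\<^sup>1 < 2\<^sup>3\<^sup>k\<^sup>-\<^sup>1\<close>.

  Primitive divisors exist by the classical cyclotomic argument. By strong divisibility and lifting
  the exponent, \<open>v\<^sub>p(B\<^sub>d)\<close> is determined by the rank of apparition of \<open>p\<close>; if \<open>B\<^sub>n\<close> had no primitive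
  prime divisor, the quotient \<open>\<Phi>\<^sub>n = \<Prod>\<^sub>d\<^sub>|\<^sub>n B\<^sub>d\<^sup>\<mu>\<^sup>(\<^sup>n\<^sup>/\<^sup>d\<^sup>)\<close> would divide the radical of \<open>n\<close>.
  But \<open>B\<^sub>d \<approx> \<alpha>\<^sup>d / (4\<surd>2)\<close> with \<open>\<alpha> = 3 + 2\<surd>2\<close>, so \<open>\<Phi>\<^sub>n\<close> is roughly \<open>\<alpha>\<^sup>\<phi>\<^sup>(\<^sup>n\<^sup>)\<close>, far larger than
  the radical.
\<close>

section \<open>Balancing and Lucas-balancing numbers over the integers\<close>

lemma balancing_le_Suc: "balancing n \<le> balancing (Suc n)"
  by (induction n) auto

definition balancing_int :: "nat \<Rightarrow> int" where
  "balancing_int n = int (balancing n)"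

definition lucas_balancing :: "nat \<Rightarrow> int" where
  "lucas_balancing n = balancing_int (Suc n) - 3 * balancing_int n"

lemma balancing_int_0 [simp]: "balancing_int 0 = 0"
  and balancing_int_1 [simp]: "balancing_int (Suc 0) = 1"
  by (simp_all add: balancing_int_def)

lemma balancing_int_nonneg: "balancing_int n \<ge> 0"
  by (simp add: balancing_int_def)

lemma balancing_int_Suc_Suc:
  "balancing_int (Suc (Suc n)) = 6 * balancing_int (Suc n) - balancing_int n"
proof -
  have "balancing n \<le> 6 * balancing (Suc n)"
    using balancing_le_Suc[of n] by linarith
  then show ?thesis
    by (simp add: balancing_int_def of_nat_diff)
qed

lemma lucas_balancing_0 [simp]: "lucas_balancing 0 = 1"
  and lucas_balancing_1 [simp]: "lucas_balancing (Suc 0) = 3"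
  by (simp_all add: lucas_balancing_def balancing_int_Suc_Suc)

lemma lucas_balancing_Suc_Suc:
  "lucas_balancing (Suc (Suc n)) = 6 * lucas_balancing (Suc n) - lucas_balancing n"
  by (simp add: lucas_balancing_def balancing_int_Suc_Suc)

lemma balancing_int_lucas_add:
  "balancing_int (m + k) = balancing_int m * lucas_balancing k + lucas_balancing m * balancing_int k \<and>
   lucas_balancing (m + k) = lucas_balancing m * lucas_balancing k + 8 * balancing_int m * balancing_int k"
proof (induction k rule: balancing.induct)
  case 1
  then show ?case by simp
next
  case 2
  then show ?case
    by (simp add: lucas_balancing_def balancing_int_Suc_Suc algebra_simps)
next
  case (3 k)
  then show ?case
    by (simp add: balancing_int_Suc_Suc lucas_balancing_Suc_Suc algebra_simps)
qed

lemma balancing_int_add: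
  "balancing_int (m + k) = balancing_int m * lucas_balancing k + lucas_balancing m * balancing_int k"
  and lucas_balancing_add:
  "lucas_balancing (m + k) = lucas_balancing m * lucas_balancing k + 8 * balancing_int m * balancing_int k"
  using balancing_int_lucas_add by simp_all

lemma lucas_balancing_pell: "lucas_balancing n ^ 2 - 8 * balancing_int n ^ 2 = 1"
proof (induction n)
  case (Suc n)
  have "balancing_int (Suc n) = 3 * balancing_int n + lucas_balancing n"
    and "lucas_balancing (Suc n) = 3 * lucas_balancing n + 8 * balancing_int n"
    using balancing_int_add[of n 1] lucas_balancing_add[of n 1] by simp_all
  with Suc show ?case
    by (simp add: power2_eq_square algebra_simps)
qed simp

lemma coprime_balancing_lucas: "coprime (balancing_int n) (lucas_balancing n)"
proof (rule coprimeI)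
  fix d assume "d dvd balancing_int n" "d dvd lucas_balancing n"
  then have "d dvd lucas_balancing n ^ 2 - 8 * balancing_int n ^ 2"
    by (simp add: power2_eq_square)
  then show "is_unit d"
    by (simp add: lucas_balancing_pell)
qed

lemma prime_dvd_balancing_imp_not_dvd_lucas:
  assumes "prime p" "int p dvd balancing_int m"
  shows "\<not> int p dvd lucas_balancing m"
  using coprime_balancing_lucas[of m] assms
  by (metis coprime_common_divisor not_prime_unit prime_nat_int_transfer)

lemma gcd_balancing_int_add:
  "gcd (balancing_int (m + k)) (balancing_int k) = gcd (balancing_int m) (balancing_int k)"
proof -
  have "balancing_int (m + k) = lucas_balancing m * balancing_int k + balancing_int m * lucas_balancing k"
    by (simp add: balancing_int_add)
  then have "gcd (balancing_int (m + k)) (balancing_int k) =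
      gcd (balancing_int k) (lucas_balancing m * balancing_int k + balancing_int m * lucas_balancing k)"
    by (simp add: gcd.commute)
  also have "\<dots> = gcd (balancing_int m * lucas_balancing k) (balancing_int k)"
    by (simp only: gcd_add_mult gcd.commute)
  also have "\<dots> = gcd (balancing_int m) (balancing_int k)"
    using coprime_balancing_lucas[of k]
    by (simp add: gcd_mult_left_right_cancel coprime_commute)
  finally show ?thesis .
qed

lemma gcd_balancing_int: "gcd (balancing_int m) (balancing_int k) = balancing_int (gcd m k)"
proof (induction "m + k" arbitrary: m k rule: less_induct)
  case less
  consider "m = 0 \<or> k = 0" | "0 < k" "k \<le> m" | "0 < m" "m < k"
    by linarith
  then show ?case
  proof cases
    case 1
    then show ?thesis
      using balancing_int_nonneg by auto
  next
    case 2
    then have "gcd (balancing_int m) (balancing_int k) = gcd (balancing_int (m - k)) (balancing_int k)"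
      using gcd_balancing_int_add[of "m - k" k] by simp
    also have "\<dots> = balancing_int (gcd (m - k) k)"
      using less 2 by simp
    finally show ?thesis
      using 2 by (metis gcd_add1 le_add_diff_inverse2)
  next
    case 3
    then have "gcd (balancing_int m) (balancing_int k) = gcd (balancing_int (k - m)) (balancing_int m)"
      using gcd_balancing_int_add[of "k - m" m] by (simp add: gcd.commute)
    also have "\<dots> = balancing_int (gcd (k - m) m)"
      using less 3 by simp
    finally show ?thesis
      using 3 by (metis gcd.commute gcd_add1 le_add_diff_inverse2 less_imp_le_nat)
  qed
qed

lemma gcd_balancing: "gcd (balancing m) (balancing k) = balancing (gcd m k)"
  using gcd_balancing_int[of m k] by (simp add: balancing_int_def gcd_int_int_eq)

lemma balancing_dvd_balancing: "d dvd n \<Longrightarrow> balancing d dvd balancing n"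
  by (metis gcd_balancing gcd_nat.absorb_iff1)

lemma balancing_pos: "0 < n \<Longrightarrow> 0 < balancing n"
proof (induction n)
  case (Suc n)
  then show ?case
    using balancing_le_Suc[of n] by (cases n) auto
qed simp

section \<open>The \<open>p\<close>-adic valuation of balancing numbers\<close>

text \<open>The congruence for \<open>C\<^sub>m\<^sub>k\<close> is only carried along to make the induction go through.\<close>
lemma balancing_int_mult:
  "\<exists>q. balancing_int (m * k) = balancing_int m * q \<and>
       balancing_int m ^ 2 dvd q - int k * lucas_balancing m ^ (k - 1) \<and>
       balancing_int m ^ 2 dvd lucas_balancing (m * k) - lucas_balancing m ^ k"
proof (induction k)
  case 0
  then show ?case by (intro exI[of _ 0]) simp
next
  case (Suc k)
  then obtain q where q: "balancing_int (m * k) = balancing_int m * q"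
    "balancing_int m ^ 2 dvd q - int k * lucas_balancing m ^ (k - 1)"
    "balancing_int m ^ 2 dvd lucas_balancing (m * k) - lucas_balancing m ^ k"
    by blast
  define q' where "q' = q * lucas_balancing m + lucas_balancing (m * k)"
  have mk: "m * Suc k = m * k + m"
    by simp
  have "int k * lucas_balancing m ^ (k - 1) * lucas_balancing m = int k * lucas_balancing m ^ k"
    by (cases k) auto
  then have "q' - int (Suc k) * lucas_balancing m ^ (Suc k - 1) =
      (q - int k * lucas_balancing m ^ (k - 1)) * lucas_balancing m +
      (lucas_balancing (m * k) - lucas_balancing m ^ k)"
    unfolding q'_def by (simp add: algebra_simps)
  moreover have "lucas_balancing (m * Suc k) - lucas_balancing m ^ Suc k =
      (lucas_balancing (m * k) - lucas_balancing m ^ k) * lucas_balancing m +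
      8 * balancing_int m ^ 2 * q"
    unfolding mk lucas_balancing_add q(1) by (simp add: algebra_simps power2_eq_square)
  moreover have "balancing_int (m * Suc k) = balancing_int m * q'"
    unfolding mk q'_def balancing_int_add q(1) by (simp add: algebra_simps)
  ultimately show ?case
    using q(2,3) by (intro exI[of _ q']) simp
qed

lemma balancing_mult_cofactor:
  assumes "0 < m"
  obtains Q where "balancing (m * k) = balancing m * Q"
    and "balancing_int m ^ 2 dvd int Q - int k * lucas_balancing m ^ (k - 1)"
proof -
  obtain q where q: "balancing_int (m * k) = balancing_int m * q"
    "balancing_int m ^ 2 dvd q - int k * lucas_balancing m ^ (k - 1)"
    using balancing_int_mult by blast
  have "0 < balancing_int m"
    using balancing_pos[OF assms] by (simp add: balancing_int_def)
  then have "0 \<le> q"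
    using q(1) balancing_int_nonneg[of "m * k"] by (simp add: zero_le_mult_iff)
  then have "int (balancing (m * k)) = int (balancing m * nat q)"
    using q(1) by (simp add: balancing_int_def)
  then show ?thesis
    using that[of "nat q"] q(2) \<open>0 \<le> q\<close> by (simp only: of_nat_eq_iff) simp
qed

lemma multiplicity_balancing_mult_coprime:
  assumes p: "prime p" and m: "0 < m" "p dvd balancing m" and k: "\<not> p dvd k"
  shows "multiplicity p (balancing (m * k)) = multiplicity p (balancing m)"
proof -
  obtain Q where Q: "balancing (m * k) = balancing m * Q"
    "balancing_int m ^ 2 dvd int Q - int k * lucas_balancing m ^ (k - 1)"
    using balancing_mult_cofactor[OF m(1)] by blast
  have p': "prime (int p)"
    using p by simp
  have pm: "int p dvd balancing_int m"
    using m(2) by (simp add: balancing_int_def)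
  then have "int p dvd balancing_int m ^ 2"
    by (simp add: power2_eq_square)
  then have "int p dvd int Q - int k * lucas_balancing m ^ (k - 1)"
    using Q(2) by (rule dvd_trans)
  moreover have "\<not> int p dvd lucas_balancing m ^ (k - 1)"
    using prime_dvd_balancing_imp_not_dvd_lucas[OF p pm] by (blast dest: prime_dvd_power[OF p'])
  then have "\<not> int p dvd int k * lucas_balancing m ^ (k - 1)"
    using k by (simp add: prime_dvd_mult_iff[OF p'])
  ultimately have "\<not> p dvd Q"
    using dvd_diff_right_iff[of "int p" "int Q"] by auto
  moreover have "Q \<noteq> 0"
    using \<open>\<not> p dvd Q\<close> by (metis dvd_0_right)
  moreover have "balancing m \<noteq> 0"
    using balancing_pos[OF m(1)] by simp
  ultimately show ?thesis
    using Q(1) p by (simp add: prime_elem_multiplicity_mult_distrib not_dvd_imp_multiplicity_0)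
qed

lemma multiplicity_balancing_mult_prime:
  assumes p: "prime p" and m: "0 < m" "p dvd balancing m"
  shows "multiplicity p (balancing (m * p)) = Suc (multiplicity p (balancing m))"
proof -
  obtain Q where Q: "balancing (m * p) = balancing m * Q"
    "balancing_int m ^ 2 dvd int Q - int p * lucas_balancing m ^ (p - 1)"
    using balancing_mult_cofactor[OF m(1)] by blast
  have p': "prime (int p)"
    using p by simp
  have pm: "int p dvd balancing_int m"
    using m(2) by (simp add: balancing_int_def)
  then have "int p ^ 2 dvd balancing_int m ^ 2"
    by (rule dvd_power_same)
  then have pp: "int p ^ 2 dvd int Q - int p * lucas_balancing m ^ (p - 1)"
    using Q(2) by (rule dvd_trans)
  have "int p dvd int p ^ 2"
    by (simp add: power2_eq_square)
  then have "int p dvd int Q - int p * lucas_balancing m ^ (p - 1)"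
    using pp by (rule dvd_trans)
  then have "int p dvd int Q"
    using dvd_diff_left_iff[of "int p" "int p * lucas_balancing m ^ (p - 1)" "int Q"] by simp
  moreover have "\<not> int p ^ 2 dvd int Q"
  proof
    assume "int p ^ 2 dvd int Q"
    then have "int p ^ 2 dvd int p * lucas_balancing m ^ (p - 1)"
      using pp dvd_diff_right_iff by blast
    then have "int p dvd lucas_balancing m ^ (p - 1)"
      using prime_gt_0_nat[OF p] by (simp add: power2_eq_square)
    then have "int p dvd lucas_balancing m"
      by (rule prime_dvd_power[OF p'])
    then show False
      using prime_dvd_balancing_imp_not_dvd_lucas[OF p pm] by simp
  qed
  ultimately have "p dvd Q" "\<not> p ^ 2 dvd Q"
    by (simp, metis of_nat_dvd_iff of_nat_power)
  then have "multiplicity p Q = 1"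
    by (intro multiplicity_eqI) (simp_all add: power2_eq_square)
  moreover have "Q \<noteq> 0"
    using \<open>\<not> p ^ 2 dvd Q\<close> by (metis dvd_0_right)
  moreover have "balancing m \<noteq> 0"
    using balancing_pos[OF m(1)] by simp
  ultimately show ?thesis
    using Q(1) p by (simp add: prime_elem_multiplicity_mult_distrib)
qed

lemma multiplicity_balancing_mult:
  assumes p: "prime p" and m: "0 < m" "p dvd balancing m" and k: "0 < k"
  shows "multiplicity p (balancing (m * k)) = multiplicity p (balancing m) + multiplicity p k"
  using k
proof (induction k rule: less_induct)
  case (less k)
  show ?case
  proof (cases "p dvd k")
    case False
    then show ?thesis
      using multiplicity_balancing_mult_coprime[OF p m] by (simp add: not_dvd_imp_multiplicity_0)
  next
    case True
    then obtain k' where k': "k = p * k'"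
      by blast
    have "0 < k'" "k' < k"
      using k' less.prems prime_gt_1_nat[OF p] by auto
    have "p dvd balancing (m * k')"
      using m(2) balancing_dvd_balancing[of m "m * k'"] by (simp add: dvd_trans)
    then have "multiplicity p (balancing (m * k' * p)) = Suc (multiplicity p (balancing (m * k')))"
      using multiplicity_balancing_mult_prime[OF p, of "m * k'"] m(1) \<open>0 < k'\<close> by simp
    then have "multiplicity p (balancing (m * k)) = Suc (multiplicity p (balancing (m * k')))"
      using k' by (simp add: ac_simps)
    also have "\<dots> = multiplicity p (balancing m) + Suc (multiplicity p k')"
      using less.IH[OF \<open>k' < k\<close> \<open>0 < k'\<close>] by simp
    also have "Suc (multiplicity p k') = multiplicity p k"
      using k' \<open>0 < k'\<close> multiplicity_times_same[where p = p and x = k'] prime_gt_1_nat[OF p] by simp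
    finally show ?thesis .
  qed
qed

section \<open>The rank of apparition\<close>

definition balancing_rank :: "nat \<Rightarrow> nat" where
  "balancing_rank p = (LEAST m. 0 < m \<and> p dvd balancing m)"

lemma balancing_rank:
  assumes "0 < n" "p dvd balancing n"
  shows "0 < balancing_rank p" "p dvd balancing (balancing_rank p)" "balancing_rank p \<le> n"
proof -
  have "0 < balancing_rank p \<and> p dvd balancing (balancing_rank p)"
    unfolding balancing_rank_def by (rule LeastI[of _ n]) (use assms in simp)
  then show "0 < balancing_rank p" "p dvd balancing (balancing_rank p)"
    by auto
  show "balancing_rank p \<le> n"
    unfolding balancing_rank_def by (rule Least_le) (use assms in simp)
qed

lemma dvd_balancing_iff_rank_dvd:
  assumes "0 < n" "p dvd balancing n"
  shows "p dvd balancing d \<longleftrightarrow> balancing_rank p dvd d"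
proof
  assume "balancing_rank p dvd d"
  then show "p dvd balancing d"
    using balancing_rank(2)[OF assms] balancing_dvd_balancing dvd_trans by blast
next
  assume pd: "p dvd balancing d"
  define g where "g = gcd (balancing_rank p) d"
  have "p dvd balancing g"
    using pd balancing_rank(2)[OF assms] unfolding g_def by (simp flip: gcd_balancing)
  moreover have "0 < g" "g dvd balancing_rank p"
    using balancing_rank(1)[OF assms] unfolding g_def by auto
  ultimately have "g = balancing_rank p"
    using balancing_rank(3)[of g p] balancing_rank(1)[OF assms] by (simp add: dvd_imp_le le_antisym)
  then show "balancing_rank p dvd d"
    unfolding g_def by (metis gcd_dvd2)
qed

lemma multiplicity_balancing:
  assumes p: "prime p" and n: "0 < n" "p dvd balancing n" and d: "0 < d"
  shows "multiplicity p (balancing d) =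
    (if balancing_rank p dvd d
     then multiplicity p (balancing (balancing_rank p)) + multiplicity p (d div balancing_rank p)
     else 0)"
proof (cases "balancing_rank p dvd d")
  case True
  then obtain k where k: "d = balancing_rank p * k"
    by blast
  then show ?thesis
    using multiplicity_balancing_mult[OF p balancing_rank(1,2)[OF n], of k] True d
      balancing_rank(1)[OF n] by simp
next
  case False
  then show ?thesis
    using dvd_balancing_iff_rank_dvd[OF n] by (simp add: not_dvd_imp_multiplicity_0)
qed

section \<open>Squarefree divisors as sets of primes\<close>

lemma prod_primes_dvd_iff:
  fixes S :: "nat set"
  assumes "finite S" "\<forall>q\<in>S. prime q"
  shows "\<Prod>S dvd m \<longleftrightarrow> (\<forall>q\<in>S. q dvd m)"
proof
  show "\<Prod>S dvd m \<Longrightarrow> \<forall>q\<in>S. q dvd m"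
    using assms(1) by (meson dvd_prodI dvd_trans)
  show "\<forall>q\<in>S. q dvd m \<Longrightarrow> \<Prod>S dvd m"
    using assms
  proof (induction S rule: finite_induct)
    case (insert q S)
    have "coprime q (\<Prod>S)"
      using insert by (intro prod_coprime_right) (auto intro: primes_coprime)
    then show ?case
      using insert by (simp add: divides_mult)
  qed simp
qed

lemma prod_subset_prime_factors_dvd:
  fixes n :: nat
  shows "S \<subseteq> prime_factors n \<Longrightarrow> \<Prod>S dvd n"
proof -
  assume S: "S \<subseteq> prime_factors n"
  then have "finite S"
    by (rule finite_subset) simp
  moreover have "\<forall>q\<in>S. prime q" "\<forall>q\<in>S. q dvd n"
    using S by auto
  ultimately show ?thesis
    using prod_primes_dvd_iff[of S n] by simp
qed

lemma prime_factors_prod_primes: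
  fixes S :: "nat set"
  assumes "finite S" "\<forall>q\<in>S. prime q"
  shows "prime_factors (\<Prod>S) = S"
proof -
  have "\<Prod>S = prod_mset (mset_set S)"
    by (simp add: prod_unfold_prod_mset)
  moreover have "prime_factorization (prod_mset (mset_set S)) = mset_set S"
    by (rule prime_factorization_prod_mset_primes) (use assms in simp)
  ultimately have "prime_factorization (\<Prod>S) = mset_set S"
    by simp
  then show ?thesis
    using assms(1) by (metis finite_set_mset_mset_set)
qed

lemma multiplicity_prod_primes:
  fixes S :: "nat set"
  assumes "finite S" "\<forall>q\<in>S. prime q" "prime p"
  shows "multiplicity p (\<Prod>S) = (if p \<in> S then 1 else 0)"
proof -
  have "0 \<notin> S"
    using assms(2) by auto
  then have "multiplicity p (\<Prod>S) = (\<Sum>q\<in>S. multiplicity p q)"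
    using assms by (simp add: prime_elem_multiplicity_prod_distrib)
  also have "\<dots> = (\<Sum>q\<in>S. if q = p then 1 else 0)"
    using assms(2,3) by (intro sum.cong refl) (auto simp: prime_multiplicity_other)
  finally show ?thesis
    using assms(1) by (simp add: sum.delta')
qed

definition even_subsets :: "'a set \<Rightarrow> 'a set set" where
  "even_subsets P = {S \<in> Pow P. even (card S)}"

definition odd_subsets :: "'a set \<Rightarrow> 'a set set" where
  "odd_subsets P = {S \<in> Pow P. odd (card S)}"

lemma finite_even_subsets [simp]: "finite P \<Longrightarrow> finite (even_subsets P)"
  and finite_odd_subsets [simp]: "finite P \<Longrightarrow> finite (odd_subsets P)"
  by (simp_all add: even_subsets_def odd_subsets_def)

lemma Pow_eq_even_Un_odd_subsets: "Pow P = even_subsets P \<union> odd_subsets P"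
  and even_odd_subsets_disjoint: "even_subsets P \<inter> odd_subsets P = {}"
  by (auto simp: even_subsets_def odd_subsets_def)

definition toggle :: "'a \<Rightarrow> 'a set \<Rightarrow> 'a set" where
  "toggle q S = (if q \<in> S then S - {q} else insert q S)"

lemma toggle_toggle [simp]: "toggle q (toggle q S) = S"
  by (cases "q \<in> S") (simp_all add: toggle_def insert_Diff Diff_insert_absorb insert_absorb)

lemma toggle_subset_iff: "q \<in> T \<Longrightarrow> toggle q S \<subseteq> T \<longleftrightarrow> S \<subseteq> T"
  by (cases "q \<in> S") (auto simp: toggle_def)

lemma mem_toggle_iff: "p \<noteq> q \<Longrightarrow> p \<in> toggle q S \<longleftrightarrow> p \<in> S"
  by (simp add: toggle_def)

lemma even_card_toggle_iff:
  assumes "finite S"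
  shows "even (card (toggle q S)) \<longleftrightarrow> odd (card S)"
proof (cases "q \<in> S")
  case True
  then have "0 < card S"
    using assms card_gt_0_iff by blast
  then show ?thesis
    using True by (simp add: toggle_def card_Diff_singleton)
next
  case False
  then show ?thesis
    using assms by (simp add: toggle_def)
qed

lemma bij_betw_toggle:
  assumes "finite P" "q \<in> P"
  shows "bij_betw (toggle q) (even_subsets P) (odd_subsets P)"
proof (rule bij_betw_byWitness[where f' = "toggle q"])
  have toggle_mem: "toggle q S \<in> even_subsets P \<longleftrightarrow> S \<in> odd_subsets P"
    and "toggle q S \<in> odd_subsets P \<longleftrightarrow> S \<in> even_subsets P" for S
  proof -
    have pow: "toggle q S \<subseteq> P \<longleftrightarrow> S \<subseteq> P"
      using assms(2) by (rule toggle_subset_iff)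
    moreover have "S \<subseteq> P \<Longrightarrow> finite S"
      using assms(1) by (rule rev_finite_subset)
    ultimately show "toggle q S \<in> even_subsets P \<longleftrightarrow> S \<in> odd_subsets P"
      and "toggle q S \<in> odd_subsets P \<longleftrightarrow> S \<in> even_subsets P"
      using even_card_toggle_iff[of S q] by (auto simp: even_subsets_def odd_subsets_def)
  qed
  then show "toggle q ` even_subsets P \<subseteq> odd_subsets P"
    and "toggle q ` odd_subsets P \<subseteq> even_subsets P"
    by auto
qed simp_all

lemma card_odd_subsets:
  assumes "finite P" "q \<in> P"
  shows "card (odd_subsets P) = card (even_subsets P)"
  using bij_betw_same_card[OF bij_betw_toggle[OF assms]] by simp

text \<open>
  Toggling an element \<open>q \<noteq> p\<close> of \<open>T\<close> matches even and odd subsets with equal weights;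
  if \<open>T = {p}\<close>, only the pair \<open>{}, {p}\<close> is unmatched.
\<close>
lemma sum_even_subsets_le_odd:
  fixes h :: "bool \<Rightarrow> nat"
  assumes "finite P" "T \<subseteq> P" "T \<noteq> {}" and "T = {p} \<Longrightarrow> h False \<le> Suc (h True)"
  defines "w S \<equiv> if S \<subseteq> T then h (p \<in> S) else 0"
  shows "(\<Sum>S\<in>even_subsets P. w S) \<le> (\<Sum>S\<in>odd_subsets P. w S) + (if p \<in> P then 1 else 0)"
proof (cases "\<exists>q\<in>T. q \<noteq> p")
  case True
  then obtain q where q: "q \<in> T" "p \<noteq> q"
    by blast
  then have "q \<in> P"
    using assms(2) by blast
  have "(\<Sum>S\<in>odd_subsets P. w S) = (\<Sum>S\<in>even_subsets P. w (toggle q S))"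
    using sum.reindex_bij_betw[OF bij_betw_toggle[OF assms(1) \<open>q \<in> P\<close>], of w] by simp
  also have "\<dots> = (\<Sum>S\<in>even_subsets P. w S)"
    using q by (intro sum.cong refl) (simp add: w_def toggle_subset_iff mem_toggle_iff)
  finally show ?thesis
    by simp
next
  case False
  then have T: "T = {p}"
    using assms(3) by auto
  then have "p \<in> P"
    using assms(2) by simp
  have "w S \<le> w (toggle p S) + (if S = {} then 1 else 0)" if "S \<in> even_subsets P" for S
  proof (cases "S \<subseteq> T")
    case True
    then have "S = {} \<or> S = {p}"
      using T by (simp add: subset_singleton_iff)
    then have "S = {}"
      using that by (auto simp: even_subsets_def)
    then show ?thesis
      using T assms(4) by (simp add: w_def toggle_def)
  qed (simp add: w_def)
  then have "(\<Sum>S\<in>even_subsets P. w S) \<le> (\<Sum>S\<in>even_subsets P. w (toggle p S) + (if S = {} then 1 else 0))"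
    by (rule sum_mono)
  also have "\<dots> = (\<Sum>S\<in>even_subsets P. w (toggle p S)) + 1"
    using assms(1) by (simp add: sum.distrib sum.delta) (simp add: even_subsets_def)
  also have "(\<Sum>S\<in>even_subsets P. w (toggle p S)) = (\<Sum>S\<in>odd_subsets P. w S)"
    using sum.reindex_bij_betw[OF bij_betw_toggle[OF assms(1) \<open>p \<in> P\<close>], of w] by simp
  finally show ?thesis
    using \<open>p \<in> P\<close> by simp
qed

lemma sum_Pow_alternating:
  fixes f :: "'a set \<Rightarrow> 'b :: comm_ring_1"
  assumes "finite P"
  shows "(\<Sum>S\<in>Pow P. (-1) ^ card S * f S) = (\<Sum>S\<in>even_subsets P. f S) - (\<Sum>S\<in>odd_subsets P. f S)"
proof -
  have "(\<Sum>S\<in>Pow P. (-1) ^ card S * f S) =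
      (\<Sum>S\<in>even_subsets P. (-1) ^ card S * f S) + (\<Sum>S\<in>odd_subsets P. (-1) ^ card S * f S)"
    unfolding Pow_eq_even_Un_odd_subsets
    by (rule sum.union_disjoint) (simp_all add: assms even_odd_subsets_disjoint)
  also have "(\<Sum>S\<in>even_subsets P. (-1) ^ card S * f S) = (\<Sum>S\<in>even_subsets P. f S)"
    by (rule sum.cong) (simp_all add: even_subsets_def)
  also have "(\<Sum>S\<in>odd_subsets P. (-1) ^ card S * f S) = (\<Sum>S\<in>odd_subsets P. - f S)"
    by (rule sum.cong) (simp_all add: odd_subsets_def)
  finally show ?thesis
    by (simp add: sum_negf)
qed

lemma totient_inclusion_exclusion:
  assumes "0 < n"
  shows "(\<Sum>S\<in>even_subsets (prime_factors n). n div \<Prod>S) =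
    totient n + (\<Sum>S\<in>odd_subsets (prime_factors n). n div \<Prod>S)"
proof -
  define P where "P = prime_factors n"
  have summand: "real n * (\<Prod>q\<in>S. - 1 / real q) = (-1) ^ card S * real (n div \<Prod>S)"
    if "S \<subseteq> P" for S
  proof -
    have "(\<Prod>q\<in>S. - 1 / real q) = (-1) ^ card S / real (\<Prod>S)"
      using prod_dividef[of "\<lambda>_. -1" real S] by simp
    then show ?thesis
      using prod_subset_prime_factors_dvd[of S n] that by (simp add: P_def real_of_nat_div)
  qed
  have "real (totient n) = real n * (\<Prod>q\<in>P. - 1 / real q + 1)"
    by (simp add: totient_formula2 P_def)
  also have "(\<Prod>q\<in>P. - 1 / real q + 1) = (\<Sum>S\<in>Pow P. \<Prod>q\<in>S. - 1 / real q)"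
    using prod_add[of P "\<lambda>q. - 1 / real q" "\<lambda>_. 1"] by (simp add: P_def)
  also have "real n * \<dots> = (\<Sum>S\<in>Pow P. (-1) ^ card S * real (n div \<Prod>S))"
    unfolding sum_distrib_left by (intro sum.cong refl) (use summand in auto)
  also have "\<dots> = real (\<Sum>S\<in>even_subsets P. n div \<Prod>S) - real (\<Sum>S\<in>odd_subsets P. n div \<Prod>S)"
    by (simp add: sum_Pow_alternating P_def)
  finally show ?thesis
    unfolding P_def by linarith
qed

lemma card_even_subsets_le_prod_pred:
  fixes P :: "nat set"
  assumes "finite P" "\<forall>q\<in>P. prime q"
  shows "card (even_subsets P) \<le> (\<Prod>q\<in>P. q - 1)"
proof -
  text \<open>Removing the prime \<open>2\<close> is injective on even subsets, since it changes the parity.\<close>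
  have "inj_on (\<lambda>S. S - {2}) (even_subsets P)"
  proof (rule inj_onI)
    fix S S' assume S: "S \<in> even_subsets P" "S' \<in> even_subsets P" and eq: "S - {2} = S' - {2}"
    have no_switch: False
      if "2 \<in> A" "2 \<notin> B" "A - {2} = B - {2}" "finite B" "even (card A)" "even (card B)"
      for A B :: "nat set"
    proof -
      have "A = insert 2 B"
        using that(1-3) by blast
      then show False
        using that(2,4-6) by simp
    qed
    have "finite S" "finite S'"
      using S assms(1) finite_subset by (auto simp: even_subsets_def)
    then have "2 \<in> S \<longleftrightarrow> 2 \<in> S'"
      using no_switch[of S S'] no_switch[of S' S] S eq by (auto simp: even_subsets_def)
    then show "S = S'"
      using eq by blast
  qed
  moreover have "(\<lambda>S. S - {2}) ` even_subsets P \<subseteq> Pow (P - {2})"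
    by (auto simp: even_subsets_def)
  ultimately have "card (even_subsets P) \<le> card (Pow (P - {2}))"
    by (rule card_inj_on_le) (simp add: assms(1))
  also have "\<dots> = (\<Prod>q\<in>P - {2}. 2)"
    using assms(1) by (simp add: card_Pow)
  also have "\<dots> \<le> (\<Prod>q\<in>P - {2}. q - 1)"
  proof (rule prod_mono)
    fix q
    assume "q \<in> P - {2}"
    then have "prime q" "q \<noteq> 2"
      using assms(2) by auto
    then have "3 \<le> q"
      using prime_ge_2_nat[of q] by linarith
    then show "0 \<le> (2::nat) \<and> 2 \<le> q - 1"
      by simp
  qed
  also have "\<dots> \<le> (\<Prod>q\<in>P. q - 1)"
    using assms(1) by (cases "2 \<in> P") (simp_all add: prod.remove)
  finally show ?thesis .
qed

lemma prod_pred_prime_factors_le_totient: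
  assumes "0 < n"
  shows "(\<Prod>q\<in>prime_factors n. q - 1) \<le> totient n"
  unfolding totient_formula1[OF assms]
  by (rule prod_mono) (auto intro: prime_gt_0_nat)

lemma le_five_power_diff_two:
  assumes "3 \<le> q"
  shows "q \<le> (5::nat) ^ (q - 2)"
proof -
  obtain k where "q = k + 3"
    using assms le_Suc_ex by (metis add.commute)
  moreover have "k + 3 \<le> (5::nat) ^ (k + 1)"
    by (induction k) auto
  ultimately show ?thesis
    by simp
qed

lemma five_mult_prod_odd_primes_le:
  fixes A :: "nat set"
  assumes "finite A" "\<forall>q\<in>A. prime q \<and> q \<noteq> 2"
  shows "5 * \<Prod>A \<le> 5 ^ (\<Prod>q\<in>A. q - 1)"
  using assms
proof (induction A rule: finite_induct)
  case (insert q A)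
  define M where "M = (\<Prod>q\<in>A. q - 1)"
  have "3 \<le> q"
    using insert.prems prime_ge_2_nat[of q] by force
  have "1 \<le> M"
    unfolding M_def using insert.prems by (intro prod_ge_1) (auto dest!: prime_ge_2_nat)
  have "5 * \<Prod>(insert q A) = 5 * \<Prod>A * q"
    using insert by simp
  also have "\<dots> \<le> 5 ^ M * 5 ^ (q - 2)"
    using insert le_five_power_diff_two[OF \<open>3 \<le> q\<close>] by (intro mult_le_mono) (simp_all add: M_def)
  also have "\<dots> \<le> 5 ^ M * (5 ^ M) ^ (q - 2)"
    using \<open>1 \<le> M\<close> by (intro mult_le_mono power_mono) (simp_all add: self_le_power)
  also have "\<dots> = 5 ^ (M * Suc (q - 2))"
    by (simp add: power_add power_mult)
  also have "Suc (q - 2) = q - 1"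
    using \<open>3 \<le> q\<close> by simp
  also have "M * (q - 1) = (\<Prod>q\<in>insert q A. q - 1)"
    using insert by (simp add: M_def)
  finally show ?case .
qed simp

lemma prod_prime_factors_lt_five_power_totient:
  assumes "0 < n"
  shows "\<Prod>(prime_factors n) < 5 ^ totient n"
proof -
  define P where "P = prime_factors n"
  have "0 < \<Prod>(P - {2})"
    by (intro prod_pos) (auto simp: P_def intro: prime_gt_0_nat in_prime_factors_imp_prime)
  moreover have "5 * \<Prod>(P - {2}) \<le> 5 ^ (\<Prod>q\<in>P - {2}. q - 1)"
    by (intro five_mult_prod_odd_primes_le) (auto simp: P_def)
  moreover have "\<Prod>P \<le> 2 * \<Prod>(P - {2})"
    by (cases "2 \<in> P") (simp_all add: P_def prod.remove)
  ultimately have "\<Prod>P < 5 ^ (\<Prod>q\<in>P - {2}. q - 1)"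
    by linarith
  also have "(5::nat) ^ (\<Prod>q\<in>P - {2}. q - 1) = 5 ^ (\<Prod>q\<in>P. q - 1)"
    by (cases "2 \<in> P") (simp_all add: P_def prod.remove)
  also have "\<dots> \<le> 5 ^ totient n"
    using prod_pred_prime_factors_le_totient[OF assms] by (simp add: P_def)
  finally show ?thesis
    by (simp add: P_def)
qed

lemma card_even_subsets_prime_factors_le_totient:
  assumes "0 < n"
  shows "card (even_subsets (prime_factors n)) \<le> totient n"
proof -
  have "card (even_subsets (prime_factors n)) \<le> (\<Prod>q\<in>prime_factors n. q - 1)"
    by (rule card_even_subsets_le_prod_pred) (auto intro: in_prime_factors_imp_prime)
  also have "\<dots> \<le> totient n"
    using assms by (rule prod_pred_prime_factors_le_totient)
  finally show ?thesis .
qed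

section \<open>Growth of the balancing numbers\<close>

definition balancing_alpha :: real where
  "balancing_alpha = 3 + 2 * sqrt 2"

definition balancing_beta :: real where
  "balancing_beta = 3 - 2 * sqrt 2"

lemma balancing_Binet:
  "real (balancing n) = (balancing_alpha ^ n - balancing_beta ^ n) / (4 * sqrt 2)"
proof (induction n rule: balancing.induct)
  case (3 n)
  have "x ^ Suc (Suc n) = 6 * x ^ Suc n - x ^ n" if "x ^ 2 = 6 * x - 1" for x :: real
  proof -
    have "x ^ Suc (Suc n) = x ^ n * x ^ 2"
      by (simp add: power2_eq_square)
    then show ?thesis
      by (simp add: that algebra_simps)
  qed
  moreover have "balancing_alpha ^ 2 = 6 * balancing_alpha - 1" "balancing_beta ^ 2 = 6 * balancing_beta - 1"
    by (simp_all add: balancing_alpha_def balancing_beta_def power2_eq_square algebra_simps)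
  ultimately show ?case
    using 3 balancing_int_Suc_Suc[of n] by (simp add: balancing_int_def diff_divide_distrib)
qed (simp_all add: balancing_alpha_def balancing_beta_def)

lemma five_le_four_sqrt_two: "5 \<le> 4 * sqrt (2::real)"
  by (rule power2_le_imp_le) (simp_all add: power_mult_distrib)

lemma balancing_beta_bounds: "0 < balancing_beta" "balancing_beta \<le> 1"
proof -
  have "2 * sqrt 2 < (3::real)"
    by (rule power2_less_imp_less) (simp_all add: power_mult_distrib)
  then show "0 < balancing_beta"
    by (simp add: balancing_beta_def)
  show "balancing_beta \<le> 1"
    by (simp add: balancing_beta_def)
qed

lemma balancing_alpha_minus_beta: "balancing_alpha - balancing_beta = 4 * sqrt 2"
  by (simp add: balancing_alpha_def balancing_beta_def)

lemma four_sqrt_two_le_balancing_alpha: "4 * sqrt 2 \<le> balancing_alpha"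
  using balancing_alpha_minus_beta balancing_beta_bounds by linarith

lemma balancing_le_alpha_power: "real (balancing d) \<le> balancing_alpha ^ d / (4 * sqrt 2)"
  unfolding balancing_Binet using balancing_beta_bounds by (intro divide_right_mono) auto

lemma alpha_power_le_balancing:
  assumes "1 \<le> d"
  shows "balancing_alpha ^ (d - 1) \<le> real (balancing d)"
proof -
  have "1 \<le> balancing_alpha"
    using four_sqrt_two_le_balancing_alpha five_le_four_sqrt_two by linarith
  have "balancing_beta ^ d \<le> balancing_beta"
    using power_decreasing[of 1 d balancing_beta] assms balancing_beta_bounds by simp
  also have "\<dots> \<le> balancing_beta * balancing_alpha ^ (d - 1)"
    using balancing_beta_bounds one_le_power[OF \<open>1 \<le> balancing_alpha\<close>] by simp
  finally have "balancing_beta ^ d \<le> balancing_beta * balancing_alpha ^ (d - 1)" .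
  have "balancing_alpha ^ d = balancing_alpha * balancing_alpha ^ (d - 1)"
    using assms by (metis Suc_diff_le diff_Suc_1 power_Suc)
  have "4 * sqrt 2 * balancing_alpha ^ (d - 1) = (balancing_alpha - balancing_beta) * balancing_alpha ^ (d - 1)"
    by (simp only: balancing_alpha_minus_beta)
  also have "\<dots> = balancing_alpha ^ d - balancing_beta * balancing_alpha ^ (d - 1)"
    using \<open>balancing_alpha ^ d = balancing_alpha * balancing_alpha ^ (d - 1)\<close> by (simp add: algebra_simps)
  also have "\<dots> \<le> balancing_alpha ^ d - balancing_beta ^ d"
    using \<open>balancing_beta ^ d \<le> balancing_beta * balancing_alpha ^ (d - 1)\<close> by simp
  finally have "4 * sqrt 2 * balancing_alpha ^ (d - 1) \<le> balancing_alpha ^ d - balancing_beta ^ d" .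
  then show ?thesis
    unfolding balancing_Binet by (simp add: field_simps)
qed

lemma alpha_power_sum_le_prod_balancing:
  assumes "finite A" "\<forall>a\<in>A. 1 \<le> f a"
  shows "balancing_alpha ^ (\<Sum>a\<in>A. f a) \<le> real (\<Prod>a\<in>A. balancing (f a)) * balancing_alpha ^ card A"
proof -
  have "0 < balancing_alpha"
    using four_sqrt_two_le_balancing_alpha five_le_four_sqrt_two by linarith
  have "balancing_alpha ^ f a = balancing_alpha ^ (f a - 1) * balancing_alpha" if "a \<in> A" for a
    using assms(2) that by (cases "f a") auto
  then have "balancing_alpha ^ (\<Sum>a\<in>A. f a) = (\<Prod>a\<in>A. balancing_alpha ^ (f a - 1) * balancing_alpha)"
    by (simp add: power_sum)
  also have "\<dots> = (\<Prod>a\<in>A. balancing_alpha ^ (f a - 1)) * balancing_alpha ^ card A"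
    by (simp add: prod.distrib)
  also have "\<dots> \<le> real (\<Prod>a\<in>A. balancing (f a)) * balancing_alpha ^ card A"
    using assms(2) alpha_power_le_balancing \<open>0 < balancing_alpha\<close>
    by (intro mult_right_mono) (auto simp: of_nat_prod intro!: prod_mono)
  finally show ?thesis .
qed

lemma prod_balancing_le_alpha_power_sum:
  "real (\<Prod>a\<in>A. balancing (f a)) * (4 * sqrt 2) ^ card A \<le> balancing_alpha ^ (\<Sum>a\<in>A. f a)"
proof -
  have "real (\<Prod>a\<in>A. balancing (f a)) \<le> (\<Prod>a\<in>A. balancing_alpha ^ f a / (4 * sqrt 2))"
    unfolding of_nat_prod by (intro prod_mono) (simp add: balancing_le_alpha_power)
  also have "\<dots> = balancing_alpha ^ (\<Sum>a\<in>A. f a) / (4 * sqrt 2) ^ card A"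
    by (simp add: prod_dividef power_sum)
  finally show ?thesis
    by (simp add: field_simps)
qed

section \<open>Primitive prime divisors\<close>

lemma div_prod_prime_factors_pos:
  fixes n :: nat
  assumes "0 < n" "S \<subseteq> prime_factors n"
  shows "0 < n div \<Prod>S"
  using assms dvd_div_eq_0_iff[OF prod_subset_prime_factors_dvd[OF assms(2)]] by simp

lemma balancing_div_prod_pos:
  "0 < n \<Longrightarrow> S \<subseteq> prime_factors n \<Longrightarrow> 0 < balancing (n div \<Prod>S)"
  by (intro balancing_pos div_prod_prime_factors_pos)

lemma multiplicity_balancing_div_prod:
  assumes p: "prime p" and n: "0 < n" "p dvd balancing n" and S: "S \<subseteq> prime_factors n"
  defines "t \<equiv> n div balancing_rank p"
  shows "multiplicity p (balancing (n div \<Prod>S)) =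
    (if S \<subseteq> prime_factors t
     then multiplicity p (balancing (balancing_rank p)) + (multiplicity p t - (if p \<in> S then 1 else 0))
     else 0)"
proof -
  define r where "r = balancing_rank p"
  have r: "0 < r" "r dvd n"
    using balancing_rank(1)[OF n] dvd_balancing_iff_rank_dvd[OF n, of n] n(2) by (simp_all add: r_def)
  have finS: "finite S" and primeS: "\<forall>q\<in>S. prime q"
    using S finite_subset by auto
  have S_dvd: "\<Prod>S dvd n"
    using prod_subset_prime_factors_dvd[OF S] .
  have S_pos: "0 < \<Prod>S"
    using primeS prime_gt_0_nat by (intro prod_pos) auto
  have "0 < t"
    using n(1) dvd_div_eq_0_iff[OF r(2)] by (simp add: t_def r_def)
  have "r dvd n div \<Prod>S \<longleftrightarrow> \<Prod>S dvd t"
    using dvd_div_iff_mult[of "\<Prod>S" n r] dvd_div_iff_mult[of r n "\<Prod>S"] S_dvd S_pos r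
    by (simp add: t_def r_def mult.commute)
  also have "\<dots> \<longleftrightarrow> S \<subseteq> prime_factors t"
    using prod_primes_dvd_iff[OF finS primeS] primeS \<open>0 < t\<close> by (auto simp: in_prime_factors_iff)
  finally have rank_dvd_iff: "r dvd n div \<Prod>S \<longleftrightarrow> S \<subseteq> prime_factors t" .
  have quotient: "multiplicity p (n div \<Prod>S div r) = multiplicity p t - (if p \<in> S then 1 else 0)"
    if "S \<subseteq> prime_factors t"
  proof -
    have "\<Prod>S dvd t"
      using that prod_primes_dvd_iff[OF finS primeS] by (auto simp: in_prime_factors_iff)
    then have t_eq: "t = (t div \<Prod>S) * \<Prod>S" and "t div \<Prod>S \<noteq> 0"
      using \<open>0 < t\<close> by (auto simp: dvd_div_eq_0_iff)
    have "multiplicity p t = multiplicity p (t div \<Prod>S) + (if p \<in> S then 1 else 0)"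
      using \<open>t div \<Prod>S \<noteq> 0\<close> S_pos p multiplicity_prod_primes[OF finS primeS p]
      by (subst t_eq) (simp add: prime_elem_multiplicity_mult_distrib)
    moreover have "n div \<Prod>S div r = t div \<Prod>S"
      by (simp add: t_def r_def div_mult2_eq[symmetric] mult.commute)
    ultimately show ?thesis
      by simp
  qed
  show ?thesis
    using multiplicity_balancing[OF p n div_prod_prime_factors_pos[OF n(1) S]] rank_dvd_iff quotient
    by (simp add: r_def)
qed

lemma balancing_div_prod_dvd:
  fixes n :: nat
  assumes "S \<subseteq> prime_factors n"
  shows "balancing (n div \<Prod>S) dvd balancing n"
proof -
  have "n div \<Prod>S dvd n"
    using prod_subset_prime_factors_dvd[OF assms] by (metis dvd_div_mult_self dvd_triv_left)
  then show ?thesis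
    by (rule balancing_dvd_balancing)
qed

lemma multiplicity_prod_balancing_div:
  assumes "prime p" "0 < n" "A \<subseteq> Pow (prime_factors n)"
  shows "multiplicity p (\<Prod>S\<in>A. balancing (n div \<Prod>S)) =
    (\<Sum>S\<in>A. multiplicity p (balancing (n div \<Prod>S)))"
proof -
  have "finite A"
    using assms(3) by (rule finite_subset) simp
  moreover have "0 \<notin> (\<lambda>S. balancing (n div \<Prod>S)) ` A"
    using balancing_div_prod_pos[OF assms(2)] assms(3) by (force simp: subset_eq)
  ultimately show ?thesis
    using assms(1) by (simp add: prime_elem_multiplicity_prod_distrib)
qed

lemma sum_multiplicity_even_subsets_le:
  assumes p: "prime p" and n: "0 < n" "p dvd balancing n" and rank: "balancing_rank p < n"
  shows "(\<Sum>S\<in>even_subsets (prime_factors n). multiplicity p (balancing (n div \<Prod>S))) \<le>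
    (\<Sum>S\<in>odd_subsets (prime_factors n). multiplicity p (balancing (n div \<Prod>S))) +
    (if p \<in> prime_factors n then 1 else 0)"
proof -
  define P where "P = prime_factors n"
  define t where "t = n div balancing_rank p"
  define h where "h b = multiplicity p (balancing (balancing_rank p)) + (multiplicity p t - (if b then 1 else 0))"
    for b
  have n_eq: "n = balancing_rank p * t"
    using dvd_balancing_iff_rank_dvd[OF n, of n] n(2) by (simp add: t_def)
  have "1 < t"
  proof (rule ccontr)
    assume "\<not> 1 < t"
    then have "t = 0 \<or> t = 1"
      by linarith
    then show False
      using n_eq rank n(1) by auto
  qed
  then obtain q where "prime q" "q dvd t"
    using prime_factor_nat[of t] by auto
  then have "q \<in> prime_factors t"
    using \<open>1 < t\<close> by (simp add: in_prime_factors_iff)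
  then have nonempty: "prime_factors t \<noteq> {}"
    by blast
  have "t dvd n"
    using n_eq by simp
  then have "prime_factors t \<subseteq> P"
    unfolding P_def using n(1) by (intro dvd_prime_factors) simp_all
  then have "(\<Sum>S\<in>even_subsets P. if S \<subseteq> prime_factors t then h (p \<in> S) else 0) \<le>
      (\<Sum>S\<in>odd_subsets P. if S \<subseteq> prime_factors t then h (p \<in> S) else 0) + (if p \<in> P then 1 else 0)"
    using nonempty by (intro sum_even_subsets_le_odd) (simp_all add: P_def h_def)
  moreover have "multiplicity p (balancing (n div \<Prod>S)) = (if S \<subseteq> prime_factors t then h (p \<in> S) else 0)"
    if "S \<in> Pow P" for S
    using multiplicity_balancing_div_prod[OF p n] that by (simp add: h_def t_def P_def)
  then have "(\<Sum>S\<in>A. multiplicity p (balancing (n div \<Prod>S))) =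
      (\<Sum>S\<in>A. if S \<subseteq> prime_factors t then h (p \<in> S) else 0)" if "A \<subseteq> Pow P" for A
    using that by (auto intro!: sum.cong)
  moreover have "even_subsets P \<subseteq> Pow P" "odd_subsets P \<subseteq> Pow P"
    by (auto simp: even_subsets_def odd_subsets_def)
  ultimately show ?thesis
    by (simp add: P_def)
qed

text \<open>
  The two products are the numerator and denominator of \<open>\<Phi>\<^sub>n = \<Prod>\<^sub>d\<^sub>|\<^sub>n B\<^sub>d\<^sup>\<mu>\<^sup>(\<^sup>n\<^sup>/\<^sup>d\<^sup>)\<close>,
  indexed by the squarefree divisors \<open>\<Prod>S\<close> of \<open>n\<close>.
\<close>
lemma prod_even_subsets_dvd_prod_odd_subsets:
  assumes n: "0 < n"
    and no_primitive: "\<And>p. prime p \<Longrightarrow> p dvd balancing n \<Longrightarrow> \<exists>m. 0 < m \<and> m < n \<and> p dvd balancing m"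
  shows "(\<Prod>S\<in>even_subsets (prime_factors n). balancing (n div \<Prod>S)) dvd
    (\<Prod>S\<in>odd_subsets (prime_factors n). balancing (n div \<Prod>S)) * \<Prod>(prime_factors n)"
proof (rule multiplicity_le_imp_dvd)
  define P where "P = prime_factors n"
  define v where "v p S = multiplicity p (balancing (n div \<Prod>S))" for p S
  have subsets: "even_subsets P \<subseteq> Pow P" "odd_subsets P \<subseteq> Pow P"
    by (auto simp: even_subsets_def odd_subsets_def)
  have pos: "0 < balancing (n div \<Prod>S)" if "S \<subseteq> P" for S
    using balancing_div_prod_pos[OF n] that by (simp add: P_def)
  have "0 < (\<Prod>S\<in>even_subsets P. balancing (n div \<Prod>S))"
    using pos subsets(1) by (intro prod_pos) blast
  then show "(\<Prod>S\<in>even_subsets (prime_factors n). balancing (n div \<Prod>S)) \<noteq> 0"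
    by (simp add: P_def)
  fix p :: nat
  assume p: "prime p"
  have "0 < (\<Prod>S\<in>odd_subsets P. balancing (n div \<Prod>S))"
    using pos subsets(2) by (intro prod_pos) blast
  moreover have "0 < \<Prod>P"
    by (intro prod_pos) (auto simp: P_def intro: prime_gt_0_nat in_prime_factors_imp_prime)
  moreover have "multiplicity p (\<Prod>P) = (if p \<in> P then 1 else 0)"
    by (rule multiplicity_prod_primes) (auto simp: P_def p)
  ultimately have rhs: "multiplicity p ((\<Prod>S\<in>odd_subsets P. balancing (n div \<Prod>S)) * \<Prod>P) =
      (\<Sum>S\<in>odd_subsets P. v p S) + (if p \<in> P then 1 else 0)"
    using p subsets(2) multiplicity_prod_balancing_div[OF p n]
    by (simp add: prime_elem_multiplicity_mult_distrib v_def P_def)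
  have lhs: "multiplicity p (\<Prod>S\<in>even_subsets P. balancing (n div \<Prod>S)) = (\<Sum>S\<in>even_subsets P. v p S)"
    using multiplicity_prod_balancing_div[OF p n] subsets(1) by (simp add: v_def P_def)
  have "(\<Sum>S\<in>even_subsets P. v p S) \<le> (\<Sum>S\<in>odd_subsets P. v p S) + (if p \<in> P then 1 else 0)"
  proof (cases "p dvd balancing n")
    case False
    have "\<not> p dvd balancing (n div \<Prod>S)" if "S \<in> even_subsets P" for S
      using False balancing_div_prod_dvd[of S n] that subsets(1) dvd_trans unfolding P_def by blast
    then show ?thesis
      by (simp add: v_def not_dvd_imp_multiplicity_0)
  next
    case True
    obtain m where "0 < m" "m < n" "p dvd balancing m"
      using no_primitive[OF p True] by blast
    then have "balancing_rank p < n"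
      using balancing_rank(3)[of m p] by simp
    then show ?thesis
      using sum_multiplicity_even_subsets_le[OF p n True] by (simp add: v_def P_def)
  qed
  then show "multiplicity p (\<Prod>S\<in>even_subsets (prime_factors n). balancing (n div \<Prod>S)) \<le>
      multiplicity p ((\<Prod>S\<in>odd_subsets (prime_factors n). balancing (n div \<Prod>S)) * \<Prod>(prime_factors n))"
    using lhs rhs by (simp add: P_def)
qed

lemma prod_odd_subsets_mult_radical_less:
  assumes "2 \<le> n"
  shows "(\<Prod>S\<in>odd_subsets (prime_factors n). balancing (n div \<Prod>S)) * \<Prod>(prime_factors n) <
    (\<Prod>S\<in>even_subsets (prime_factors n). balancing (n div \<Prod>S))"
proof -
  define P where "P = prime_factors n"
  define D where "D S = n div \<Prod>S" for S
  define X where "X = (\<Prod>S\<in>even_subsets P. balancing (D S))"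
  define Y where "Y = (\<Prod>S\<in>odd_subsets P. balancing (D S))"
  define N where "N = card (even_subsets P)"
  define \<alpha> where "\<alpha> = balancing_alpha"
  define c :: real where "c = 4 * sqrt 2"
  have n: "0 < n"
    using assms by simp
  have D_pos: "0 < D S" if "S \<in> Pow P" for S
    using div_prod_prime_factors_pos[OF n] that by (simp add: D_def P_def)
  obtain q where "prime q" "q dvd n"
    using assms prime_factor_nat[of n] by auto
  then have "card (odd_subsets P) = N"
    using n card_odd_subsets[of P q] by (simp add: N_def P_def in_prime_factors_iff)
  have "N \<le> totient n"
    using card_even_subsets_prime_factors_le_totient[OF n] by (simp add: N_def P_def)
  have "c \<le> \<alpha>" "5 \<le> c"
    using four_sqrt_two_le_balancing_alpha five_le_four_sqrt_two by (simp_all add: c_def \<alpha>_def)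
  have "real (\<Prod>P) < 5 ^ totient n"
    using prod_prime_factors_lt_five_power_totient[OF n] unfolding P_def
    by (metis of_nat_less_iff of_nat_numeral of_nat_power)
  also have "\<dots> \<le> c ^ totient n"
    using \<open>5 \<le> c\<close> by (intro power_mono) simp_all
  finally have radical: "real (\<Prod>P) < c ^ totient n" .
  have "0 < Y"
    using D_pos balancing_pos by (auto simp: Y_def odd_subsets_def intro!: prod_pos)
  have "0 < \<alpha>"
    using \<open>c \<le> \<alpha>\<close> \<open>5 \<le> c\<close> by simp
  have "\<alpha> ^ N * (real Y * real (\<Prod>P)) < \<alpha> ^ N * (real Y * c ^ totient n)"
    using radical \<open>0 < Y\<close> \<open>0 < \<alpha>\<close> by simp
  also have "\<dots> = \<alpha> ^ N * c ^ (totient n - N) * (real Y * c ^ card (odd_subsets P))"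
    using \<open>N \<le> totient n\<close> \<open>card (odd_subsets P) = N\<close> by (simp add: algebra_simps flip: power_add)
  also have "\<dots> \<le> \<alpha> ^ N * \<alpha> ^ (totient n - N) * \<alpha> ^ (\<Sum>S\<in>odd_subsets P. D S)"
  proof (intro mult_mono mult_left_mono)
    show "real Y * c ^ card (odd_subsets P) \<le> \<alpha> ^ (\<Sum>S\<in>odd_subsets P. D S)"
      using prod_balancing_le_alpha_power_sum[of D "odd_subsets P"] by (simp add: Y_def c_def \<alpha>_def)
    show "c ^ (totient n - N) \<le> \<alpha> ^ (totient n - N)"
      using \<open>c \<le> \<alpha>\<close> \<open>5 \<le> c\<close> by (intro power_mono) simp_all
  qed (use \<open>0 < \<alpha>\<close> \<open>5 \<le> c\<close> in simp_all)
  also have "\<dots> = \<alpha> ^ (\<Sum>S\<in>even_subsets P. D S)"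
    using totient_inclusion_exclusion[OF n] \<open>N \<le> totient n\<close> by (simp add: D_def P_def flip: power_add)
  also have "\<dots> \<le> real X * \<alpha> ^ N"
    using alpha_power_sum_le_prod_balancing[of "even_subsets P" D] D_pos
    by (simp add: X_def N_def \<alpha>_def P_def even_subsets_def Suc_le_eq)
  finally have "real (Y * \<Prod>P) < real X"
    using \<open>0 < \<alpha>\<close> by (simp add: mult.commute)
  then show ?thesis
    by (simp only: of_nat_less_iff) (simp add: X_def Y_def D_def P_def)
qed

theorem balancing_primitive_divisor:
  assumes "2 \<le> n"
  shows "\<exists>p. prime p \<and> p dvd balancing n \<and> (\<forall>m. 0 < m \<and> m < n \<longrightarrow> \<not> p dvd balancing m)"
proof (rule ccontr)
  assume "\<not> ?thesis"
  then have "(\<Prod>S\<in>even_subsets (prime_factors n). balancing (n div \<Prod>S)) dvd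
      (\<Prod>S\<in>odd_subsets (prime_factors n). balancing (n div \<Prod>S)) * \<Prod>(prime_factors n)"
    using assms by (intro prod_even_subsets_dvd_prod_odd_subsets) auto
  moreover have "0 < (\<Prod>S\<in>odd_subsets (prime_factors n). balancing (n div \<Prod>S)) * \<Prod>(prime_factors n)"
    using balancing_div_prod_pos[of n] assms
    by (auto simp: odd_subsets_def intro!: prod_pos intro: prime_gt_0_nat in_prime_factors_imp_prime)
  ultimately show False
    using prod_odd_subsets_mult_radical_less[OF assms] by (auto dest: dvd_imp_le)
qed

section \<open>Counting divisors\<close>

lemma card_prime_factors_balancing_ge:
  assumes "0 < n"
  shows "num_divisors n - 1 \<le> card (prime_factors (balancing n))"
proof -
  define Dv where "Dv = {d. d dvd n \<and> 1 < d}"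
  have "\<forall>d\<in>Dv. \<exists>p. prime p \<and> p dvd balancing d \<and> (\<forall>m. 0 < m \<and> m < d \<longrightarrow> \<not> p dvd balancing m)"
    using balancing_primitive_divisor by (simp add: Dv_def Suc_le_eq)
  then obtain f where f: "\<And>d. d \<in> Dv \<Longrightarrow>
      prime (f d) \<and> f d dvd balancing d \<and> (\<forall>m. 0 < m \<and> m < d \<longrightarrow> \<not> f d dvd balancing m)"
    by metis
  have "f ` Dv \<subseteq> prime_factors (balancing n)"
  proof
    fix p assume "p \<in> f ` Dv"
    then obtain d where "d \<in> Dv" "p = f d"
      by blast
    then have "prime p" "p dvd balancing n"
      using f[of d] balancing_dvd_balancing[of d n] by (auto simp: Dv_def intro: dvd_trans)
    then show "p \<in> prime_factors (balancing n)"
      using balancing_pos[OF assms] by (simp add: in_prime_factors_iff)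
  qed
  moreover have "inj_on f Dv"
  proof (rule inj_onI)
    fix a b assume "a \<in> Dv" "b \<in> Dv" "f a = f b"
    then show "a = b"
      using f[of a] f[of b] by (metis Dv_def linorder_neqE_nat mem_Collect_eq not_one_less_zero gr0I)
  qed
  ultimately have "card Dv \<le> card (prime_factors (balancing n))"
    by (intro card_inj_on_le) simp_all
  moreover have "{d. d dvd n \<and> 0 < d} = insert 1 Dv" "1 \<notin> Dv" "finite Dv"
    using assms by (auto simp: Dv_def intro: finite_subset[OF _ finite_divisors_nat[of n]])
  ultimately show ?thesis
    by (simp add: num_divisors_def)
qed

lemma two_power_card_prime_factors_le_num_divisors:
  assumes "0 < m"
  shows "2 ^ card (prime_factors m) \<le> num_divisors m"
proof -
  define P where "P = prime_factors m"
  have "inj_on Prod (Pow P)"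
    by (rule inj_on_inverseI[where g = prime_factors])
      (auto simp: P_def intro!: prime_factors_prod_primes intro: finite_subset)
  moreover have "Prod ` Pow P \<subseteq> {d. d dvd m \<and> 0 < d}"
    using prod_subset_prime_factors_dvd[of _ m] assms
    by (auto simp: P_def intro!: prod_pos intro: prime_gt_0_nat in_prime_factors_imp_prime)
  moreover have "finite {d. d dvd m \<and> 0 < d}"
    using finite_divisors_nat[OF assms] by (auto intro: finite_subset)
  ultimately have "card (Pow P) \<le> num_divisors m"
    unfolding num_divisors_def by (rule card_inj_on_le)
  then show ?thesis
    by (simp add: P_def card_Pow)
qed

lemma two_power_le_num_divisors_balancing:
  assumes "0 < n"
  shows "2 ^ (num_divisors n - 1) \<le> num_divisors (balancing n)"
proof -
  have "2 ^ (num_divisors n - 1) \<le> (2::nat) ^ card (prime_factors (balancing n))"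
    using card_prime_factors_balancing_ge[OF assms] by simp
  also have "\<dots> \<le> num_divisors (balancing n)"
    using balancing_pos[OF assms] by (rule two_power_card_prime_factors_le_num_divisors)
  finally show ?thesis .
qed

lemma balancing_le_six_power: "1 \<le> k \<Longrightarrow> balancing k \<le> 6 ^ (k - 1)"
proof (induction k rule: nat_induct_at_least)
  case (Suc k)
  have "balancing (Suc k) \<le> 6 * balancing k"
    using Suc(1) by (cases k) simp_all
  also have "\<dots> \<le> 6 ^ (Suc k - 1)"
    using Suc by (cases k) simp_all
  finally show ?case .
qed simp

lemma balancing_lt_two_power:
  assumes "1 \<le> k"
  shows "balancing k < 2 ^ (3 * k - 1)"
proof -
  have "balancing k \<le> 6 ^ (k - 1)"
    using assms by (rule balancing_le_six_power)
  also have "\<dots> \<le> 8 ^ (k - 1)"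
    by (rule power_mono) simp_all
  also have "\<dots> < 2 ^ 2 * 8 ^ (k - 1)"
    by simp
  also have "\<dots> = 2 ^ (2 + 3 * (k - 1))"
    by (simp add: power_add power_mult)
  also have "2 + 3 * (k - 1) = 3 * k - 1"
    using assms by simp
  finally show ?thesis .
qed

theorem theorem3p2:
  fixes n :: nat
  assumes "n \<ge> 1"
  shows "num_divisors (balancing n) > balancing (nat \<lfloor>real (num_divisors n) / 3\<rfloor>)"
proof -
  define k where "k = num_divisors n div 3"
  have "nat \<lfloor>real (num_divisors n) / 3\<rfloor> = k"
    using floor_divide_of_nat_eq[where 'a = real, of "num_divisors n" 3] by (simp add: k_def)
  moreover have "balancing k < 2 ^ (num_divisors n - 1)"
  proof (cases "k = 0")
    case False
    then have "balancing k < 2 ^ (3 * k - 1)"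
      by (intro balancing_lt_two_power) simp
    also have "\<dots> \<le> 2 ^ (num_divisors n - 1)"
      by (intro power_increasing) (simp_all add: k_def)
    finally show ?thesis .
  qed simp
  moreover have "2 ^ (num_divisors n - 1) \<le> num_divisors (balancing n)"
    using assms by (intro two_power_le_num_divisors_balancing) simp
  ultimately show ?thesis
    by simp
qed

end
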